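(* Let $H=K_{K_{1,3},K_{1,4}}$ be the join of a star with $3$ leaves and a star with $4$ leaves. Then every proper edge-colouring of $H$ contains a rainbow copy of $K_4$.
   Context: For vertex-disjoint graphs $L,R$, the join $K_{L,R}$ has vertex set $V(L)\cup V(R)$ and edge set $E(L)\cup E(R)\cup\{uv: u\in V(L), v\in V(R)\}$. A subgraph is rainbow under an edge-colouring if all its edges receive distinct colours. *)

theory Defs
  imports Main
begin

text \<open>A (simple) graph is a pair (V, E) with E a set of 2-element subsets of V.\<close>
type_synonym 'a graph = "'a set \<times> 'a set set"

definition star :: "nat \<Rightarrow> nat graph" where
  "star n = ({0..n}, {{0, i} | i. i \<in> {1..n}})"

text \<open>Join of two graphs, made vertex-disjoint via the sum type.\<close>
definition join :: "'a graph \<Rightarrow> 'b graph \<Rightarrow> ('a + 'b) graph" where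
  "join L R = (Inl ` fst L \<union> Inr ` fst R,
     ((\<lambda>e. Inl ` e) ` snd L) \<union> ((\<lambda>e. Inr ` e) ` snd R)
     \<union> {{Inl u, Inr v} | u v. u \<in> fst L \<and> v \<in> fst R})"

definition proper_edge_colouring :: "'a graph \<Rightarrow> ('a set \<Rightarrow> 'c) \<Rightarrow> bool" where
  "proper_edge_colouring G c \<longleftrightarrow>
     (\<forall>e\<in>snd G. \<forall>f\<in>snd G. e \<noteq> f \<and> e \<inter> f \<noteq> {} \<longrightarrow> c e \<noteq> c f)"

definition has_rainbow_K4 :: "'a graph \<Rightarrow> ('a set \<Rightarrow> 'c) \<Rightarrow> bool" where
  "has_rainbow_K4 G c \<longleftrightarrow>
     (\<exists>S. S \<subseteq> fst G \<and> card S = 4 \<and>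
        (\<forall>u\<in>S. \<forall>v\<in>S. u \<noteq> v \<longrightarrow> {u, v} \<in> snd G) \<and>
        inj_on c {{u, v} | u v. u \<in> S \<and> v \<in> S \<and> u \<noteq> v})"

end

theory Submission
  imports Defs
begin

text \<open>Write ai = Inl i and bj = Inr j, so that a0 and b0 are the centres of the two stars.
  For every j the vertices a0, a1, b0, bj span a K4, and in a proper colouring only disjoint
  edges of it can share a colour. So if none of these four K4 is rainbow, then for every j one
  of c(a0 a1) = c(b0 bj), c(a0 b0) = c(a1 bj), c(a0 bj) = c(a1 b0) holds. Each side involving bj
  is the colour of an edge at a fixed vertex, hence injective in j, so each equation holds for
  at most one j, and three equations cannot cover four values of j.\<close>

lemma card_fibre_le_1_if_inj_on:
  assumes "inj_on f J"
  shows "card {j \<in> J. f j = p} \<le> 1"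
proof -
  have "{j \<in> J. f j = p} \<subseteq> {THE j. j \<in> J \<and> f j = p}"
    using inj_on_vimage_singleton[OF assms] by blast
  then show ?thesis
    using card_mono[OF finite.insertI[OF finite.emptyI]] by fastforce
qed

lemma card_le_3_if_covered_by_injective_fibres:
  assumes "inj_on f J" "inj_on g J" "inj_on h J"
    and cover: "\<forall>j\<in>J. f j = p \<or> g j = q \<or> h j = r"
  shows "card J \<le> 3"
proof -
  have "J = {j \<in> J. f j = p} \<union> {j \<in> J. g j = q} \<union> {j \<in> J. h j = r}"
    using cover by blast
  also have "card \<dots> \<le> card {j \<in> J. f j = p} + card {j \<in> J. g j = q} + card {j \<in> J. h j = r}"
    by (meson add_right_mono card_Un_le order_trans)
  also have "\<dots> \<le> 3"
    using card_fibre_le_1_if_inj_on[OF assms(1), of p] card_fibre_le_1_if_inj_on[OF assms(2), of q]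
      card_fibre_le_1_if_inj_on[OF assms(3), of r] by linarith
  finally show ?thesis .
qed

lemma proper_edge_colouring_adjacent_edges:
  assumes "proper_edge_colouring G c" "e \<in> snd G" "f \<in> snd G" "e \<noteq> f" "e \<inter> f \<noteq> {}"
  shows "c e \<noteq> c f"
  using assms unfolding proper_edge_colouring_def by blast

lemma proper_edge_colouring_inj_on_incident:
  assumes "proper_edge_colouring G c" "inj_on g N" "\<forall>j\<in>N. {u, g j} \<in> snd G \<and> g j \<noteq> u"
  shows "inj_on (\<lambda>j. c {u, g j}) N"
proof (rule inj_onI)
  fix i j assume "i \<in> N" "j \<in> N" "c {u, g i} = c {u, g j}"
  with assms have "g i = g j"
    using proper_edge_colouring_adjacent_edges[of G c "{u, g i}" "{u, g j}"]
    by (auto simp: doubleton_eq_iff)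
  with \<open>inj_on g N\<close> \<open>i \<in> N\<close> \<open>j \<in> N\<close> show "i = j"
    by (simp add: inj_on_eq_iff)
qed

lemma rainbow_K4_if_matchings_not_monochromatic:
  assumes proper: "proper_edge_colouring G c"
    and distinct: "distinct [a, b, x, y]"
    and vertices: "{a, b, x, y} \<subseteq> fst G"
    and edges: "{a, b} \<in> snd G" "{a, x} \<in> snd G" "{a, y} \<in> snd G"
      "{b, x} \<in> snd G" "{b, y} \<in> snd G" "{x, y} \<in> snd G"
    and matchings: "c {a, b} \<noteq> c {x, y}" "c {a, x} \<noteq> c {b, y}" "c {a, y} \<noteq> c {b, x}"
  shows "has_rainbow_K4 G c"
proof -
  let ?S = "{a, b, x, y}"
  let ?E = "{{a, b}, {a, x}, {a, y}, {b, x}, {b, y}, {x, y}}"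
  have K4_edges: "{{u, v} | u v. u \<in> ?S \<and> v \<in> ?S \<and> u \<noteq> v} \<subseteq> ?E"
  proof
    fix e assume "e \<in> {{u, v} | u v. u \<in> ?S \<and> v \<in> ?S \<and> u \<noteq> v}"
    then obtain u v where "e = {u, v}" "u \<in> ?S" "v \<in> ?S" "u \<noteq> v"
      by blast
    then show "e \<in> ?E"
      by (elim insertE emptyE) (simp_all add: insert_commute)
  qed
  note adjacent = proper_edge_colouring_adjacent_edges[OF proper]
  have "c {a, b} \<noteq> c {a, x}" "c {a, b} \<noteq> c {a, y}" "c {a, b} \<noteq> c {b, x}" "c {a, b} \<noteq> c {b, y}"
    "c {a, x} \<noteq> c {a, y}" "c {a, x} \<noteq> c {b, x}" "c {a, x} \<noteq> c {x, y}"
    "c {a, y} \<noteq> c {b, y}" "c {a, y} \<noteq> c {x, y}"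
    "c {b, x} \<noteq> c {b, y}" "c {b, x} \<noteq> c {x, y}" "c {b, y} \<noteq> c {x, y}"
    using distinct by (simp_all add: adjacent edges doubleton_eq_iff)
  with matchings have rainbow: "inj_on c ?E"
    by (auto simp: inj_on_def)
  have complete: "\<forall>u\<in>?S. \<forall>v\<in>?S. u \<noteq> v \<longrightarrow> {u, v} \<in> snd G"
    using edges by (auto simp: insert_commute)
  have card: "card ?S = 4"
    using distinct by simp
  show ?thesis
    unfolding has_rainbow_K4_def
  proof (intro exI[of _ ?S] conjI)
    show "inj_on c {{u, v} | u v. u \<in> ?S \<and> v \<in> ?S \<and> u \<noteq> v}"
      using rainbow K4_edges by (rule inj_on_subset)
  qed (fact vertices card complete)+
qed

lemma star_edge: "i \<in> {1..n} \<Longrightarrow> {0, i} \<in> snd (star n)"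
  unfolding star_def by auto

lemma fst_star: "fst (star n) = {0..n}"
  unfolding star_def by simp

lemma join_edge_Inl:
  assumes "{u, v} \<in> snd L"
  shows "{Inl u, Inl v} \<in> snd (join L R)"
proof -
  have "Inl ` {u, v} \<in> (\<lambda>e. Inl ` e) ` snd L"
    using assms by (rule imageI)
  then show ?thesis
    unfolding join_def by (simp only: image_insert image_empty snd_conv) blast
qed

lemma join_edge_Inr:
  assumes "{u, v} \<in> snd R"
  shows "{Inr u, Inr v} \<in> snd (join L R)"
proof -
  have "Inr ` {u, v} \<in> (\<lambda>e. Inr ` e) ` snd R"
    using assms by (rule imageI)
  then show ?thesis
    unfolding join_def by (simp only: image_insert image_empty snd_conv) blast
qed

lemma join_edge_Inl_Inr: "u \<in> fst L \<Longrightarrow> v \<in> fst R \<Longrightarrow> {Inl u, Inr v} \<in> snd (join L R)"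
  unfolding join_def by auto

lemma fst_join: "fst (join L R) = Inl ` fst L \<union> Inr ` fst R"
  unfolding join_def by simp

theorem mainTheorem6:
  fixes c :: "(nat + nat) set \<Rightarrow> 'c"
  assumes "proper_edge_colouring (join (star 3) (star 4)) c"
  shows "has_rainbow_K4 (join (star 3) (star 4)) c"
proof (rule ccontr)
  assume no_rainbow: "\<not> has_rainbow_K4 (join (star 3) (star 4)) c"
  have cover: "\<forall>j\<in>{1..4}. c {Inr 0, Inr j} = c {Inl 0, Inl 1}
      \<or> c {Inl 1, Inr j} = c {Inl 0, Inr 0} \<or> c {Inl 0, Inr j} = c {Inl 1, Inr 0}"
  proof
    fix j :: nat assume j: "j \<in> {1..4}"
    have "\<not> (c {Inl 0, Inl 1} \<noteq> c {Inr 0, Inr j} \<and> c {Inl 0, Inr 0} \<noteq> c {Inl 1, Inr j}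
        \<and> c {Inl 0, Inr j} \<noteq> c {Inl 1, Inr 0})"
      using rainbow_K4_if_matchings_not_monochromatic[OF assms, of "Inl 0" "Inl 1" "Inr 0" "Inr j"]
        no_rainbow j
      by (simp add: fst_join fst_star star_edge join_edge_Inl join_edge_Inr join_edge_Inl_Inr) blast
    then show "c {Inr 0, Inr j} = c {Inl 0, Inl 1}
        \<or> c {Inl 1, Inr j} = c {Inl 0, Inr 0} \<or> c {Inl 0, Inr j} = c {Inl 1, Inr 0}"
      by metis
  qed
  have "\<forall>j\<in>{1..4}. {u, Inr j} \<in> snd (join (star 3) (star 4)) \<and> Inr j \<noteq> u"
    if "u \<in> {Inr 0, Inl 1, Inl 0}" for u
    using that by (auto simp: fst_star star_edge join_edge_Inr join_edge_Inl_Inr)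
  then have "inj_on (\<lambda>j. c {Inr 0, Inr j}) {1..4}" "inj_on (\<lambda>j. c {Inl 1, Inr j}) {1..4}"
    "inj_on (\<lambda>j. c {Inl 0, Inr j}) {1..4}"
    by (simp_all add: proper_edge_colouring_inj_on_incident[OF assms])
  from card_le_3_if_covered_by_injective_fibres[OF this cover]
  show False
    by simp
qed

end
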